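(* Let $S$ be a finite set with $n\ge1$ elements and $p:2^{S}\to\mathbb{Z}\cup\{-\infty\}$ a set-function with $p(\emptyset)=0$ and $p(S)$ finite. Call an integer $\mu$ good if $\mu|X|\ge p(X)$ for every $X\subseteq S$, and bad otherwise; let $\mu_{\min}$ be the smallest good integer (equivalently, $\max\{\lceil p(X)/|X|\rceil:\emptyset\ne X\subseteq S\}$). Consider the following procedure. Let $\mu_0=\lceil p(S)/|S|\rceil-1$ (which is bad) and let $X_0$ be any set maximizing $p(X)-\mu_0|X|$ over $X\subseteq S$. For $j=1,2,\dots$, given $X_{j-1}$, let $\mu_j=\lceil p(X_{j-1})/|X_{j-1}|\rceil$; if $\mu_j$ is good, stop and output $\mu_j$; otherwise let $X_j$ be any set maximizing $p(X)-\mu_j|X|$ over $X\subseteq S$ (so $X_j\neq\emptyset$) and continue. Then the procedure stops, and if $h$ is the first index for which $\mu_h$ is good, then $\mu_h=\mu_{\min}$ and $h\le n$. *)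

theory Defs
  imports Complex_Main "HOL-Library.Extended_Real"
begin

text \<open>Set functions p : 2^S -> Z \<union> {-\<infinity>} are modelled as 'a set => ereal.\<close>

definition good :: "('a set \<Rightarrow> ereal) \<Rightarrow> 'a set \<Rightarrow> int \<Rightarrow> bool" where
  "good p S \<mu> \<longleftrightarrow> (\<forall>X. X \<subseteq> S \<longrightarrow> p X \<le> ereal (real_of_int \<mu> * real (card X)))"

definition mu_min :: "('a set \<Rightarrow> ereal) \<Rightarrow> 'a set \<Rightarrow> int" where
  "mu_min p S = (LEAST \<mu>::int. good p S \<mu>)"

definition maximizer :: "('a set \<Rightarrow> ereal) \<Rightarrow> 'a set \<Rightarrow> int \<Rightarrow> 'a set \<Rightarrow> bool" where
  "maximizer p S \<mu> X \<longleftrightarrow> X \<subseteq> S \<and>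
     (\<forall>Y. Y \<subseteq> S \<longrightarrow> p Y - ereal (real_of_int \<mu> * real (card Y))
                        \<le> p X - ereal (real_of_int \<mu> * real (card X)))"

definition ceil_ratio :: "('a set \<Rightarrow> ereal) \<Rightarrow> 'a set \<Rightarrow> int" where
  "ceil_ratio p X = \<lceil>real_of_ereal (p X) / real (card X)\<rceil>"

end

theory Submission
  imports Defs
begin

text \<open>
  If \<open>\<mu>\<close> is bad and \<open>X\<close> maximizes \<open>p(X) - \<mu>|X|\<close>, then \<open>p(X) > \<mu>|X|\<close>, so \<open>X \<noteq> {}\<close> and
  \<open>\<mu>' = \<lceil>p(X)/|X|\<rceil> > \<mu>\<close>; moreover every good integer is at least \<open>\<lceil>p(X)/|X|\<rceil>\<close>, so a good
  \<open>\<mu>'\<close> is already \<open>\<mu>\<^sub>m\<^sub>i\<^sub>n\<close>. If \<open>\<mu>'\<close> is bad too and \<open>X'\<close> maximizes \<open>p(X') - \<mu>'|X'|\<close>, adding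
  the two maximality inequalities gives \<open>(\<mu>' - \<mu>)(|X'| - |X|) < 0\<close>, i.e. \<open>|X'| < |X|\<close>.
  Hence the nonempty sets \<open>X\<^sub>j\<close> strictly shrink while the \<open>\<mu>\<^sub>j\<close> are bad, which happens for at
  most \<open>n\<close> indices \<open>j = 0, \<dots>, n - 1\<close>.
\<close>

lemma maximizer_subset: "maximizer p S \<mu> X \<Longrightarrow> X \<subseteq> S"
  by (simp add: maximizer_def)

lemma ceil_ratio_le_iff:
  assumes "p X = ereal r" and "card X > 0"
  shows "ceil_ratio p X \<le> m \<longleftrightarrow> p X \<le> ereal (real_of_int m * real (card X))"
  using assms by (simp add: ceil_ratio_def ceiling_le_iff pos_divide_le_eq)

lemma ceil_ratio_le_if_good:
  assumes "good p S m" and "X \<subseteq> S" and "p X = ereal r" and "card X > 0"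
  shows "ceil_ratio p X \<le> m"
proof -
  have "p X \<le> ereal (real_of_int m * real (card X))"
    using assms(1,2) by (simp add: good_def)
  with assms(3,4) show ?thesis
    by (simp add: ceil_ratio_le_iff)
qed

lemma not_good_ceil_ratio_minus_one:
  assumes "p S = ereal r" and "card S > 0"
  shows "\<not> good p S (ceil_ratio p S - 1)"
proof
  assume "good p S (ceil_ratio p S - 1)"
  from ceil_ratio_le_if_good[OF this subset_refl assms] show False
    by simp
qed

locale finite_set_function =
  fixes S :: "'a set" and p :: "'a set \<Rightarrow> ereal"
  assumes finite_ground: "finite S"
    and p_empty: "p {} = 0"
    and p_not_infinity: "Y \<subseteq> S \<Longrightarrow> p Y \<noteq> \<infinity>"
begin

lemma maximizer_of_not_good_gt:
  assumes "\<not> good p S \<mu>" and "maximizer p S \<mu> X"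
  shows "p X > ereal (real_of_int \<mu> * real (card X))"
proof -
  from assms(1) obtain Y where "Y \<subseteq> S" and "p Y > ereal (real_of_int \<mu> * real (card Y))"
    by (auto simp: good_def not_le)
  then have "0 < p Y - ereal (real_of_int \<mu> * real (card Y))"
    by (simp add: ereal_less_minus_iff)
  also have "\<dots> \<le> p X - ereal (real_of_int \<mu> * real (card X))"
    using assms(2) \<open>Y \<subseteq> S\<close> by (simp add: maximizer_def)
  finally show ?thesis
    by (simp add: ereal_less_minus_iff)
qed

lemma maximizer_of_not_goodE:
  assumes "\<not> good p S \<mu>" and "maximizer p S \<mu> X"
  obtains r where "p X = ereal r" and "r > real_of_int \<mu> * real (card X)" and "card X > 0"
proof -
  have gt: "p X > ereal (real_of_int \<mu> * real (card X))"
    using maximizer_of_not_good_gt[OF assms] .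
  have XS: "X \<subseteq> S"
    using assms(2) by (rule maximizer_subset)
  obtain r where r: "p X = ereal r"
    using gt p_not_infinity[OF XS] by (cases "p X") auto
  have "X \<noteq> {}"
    using gt p_empty by (auto simp: zero_ereal_def)
  then have "card X > 0"
    using XS finite_ground by (simp add: card_gt_0_iff finite_subset)
  with r gt show thesis
    by (intro that) auto
qed

lemma less_ceil_ratio_maximizer:
  assumes "\<not> good p S \<mu>" and "maximizer p S \<mu> X"
  shows "\<mu> < ceil_ratio p X"
proof -
  obtain r where "p X = ereal r" and "r > real_of_int \<mu> * real (card X)" and "card X > 0"
    using assms by (rule maximizer_of_not_goodE)
  then show ?thesis
    using ceil_ratio_le_iff[of p X r \<mu>] by auto
qed

lemma mu_min_eq_ceil_ratio_maximizer:
  assumes "\<not> good p S \<mu>" and "maximizer p S \<mu> X" and "good p S (ceil_ratio p X)"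
  shows "mu_min p S = ceil_ratio p X"
proof -
  obtain r where "p X = ereal r" and "card X > 0"
    using assms(1,2) by (rule maximizer_of_not_goodE)
  then have "ceil_ratio p X \<le> m" if "good p S m" for m
    using ceil_ratio_le_if_good[OF that maximizer_subset[OF assms(2)]] by blast
  then show ?thesis
    unfolding mu_min_def using assms(3) by (blast intro: Least_equality)
qed

lemma card_maximizer_less:
  assumes bad: "\<not> good p S \<mu>" and max: "maximizer p S \<mu> X"
    and bad': "\<not> good p S (ceil_ratio p X)" and max': "maximizer p S (ceil_ratio p X) X'"
  shows "card X' < card X"
proof -
  define \<mu>' where "\<mu>' = ceil_ratio p X"
  obtain r where r: "p X = ereal r" and "card X > 0"
    using bad max by (rule maximizer_of_not_goodE)
  obtain r' where r': "p X' = ereal r'" and X'_gt: "r' > real_of_int \<mu>' * real (card X')"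
    using bad' max' unfolding \<mu>'_def by (rule maximizer_of_not_goodE)
  have X_le: "r \<le> real_of_int \<mu>' * real (card X)"
    using ceil_ratio_le_iff[of p X r \<mu>'] r \<open>card X > 0\<close> by (simp add: \<mu>'_def)
  have "p X' - ereal (real_of_int \<mu> * real (card X')) \<le> p X - ereal (real_of_int \<mu> * real (card X))"
    using max maximizer_subset[OF max'] unfolding maximizer_def by blast
  then have "r' - real_of_int \<mu> * real (card X') \<le> r - real_of_int \<mu> * real (card X)"
    using r r' by simp
  with X'_gt X_le have "(real_of_int \<mu>' - real_of_int \<mu>) * (real (card X') - real (card X)) < 0"
    by (simp add: algebra_simps)
  moreover have "\<mu> < \<mu>'"
    unfolding \<mu>'_def using bad max by (rule less_ceil_ratio_maximizer)
  ultimately show ?thesis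
    by (simp add: mult_less_0_iff)
qed

lemma card_procedure_bound:
  assumes step: "\<And>j. mu (Suc j) = ceil_ratio p (X j)"
    and maximizers: "\<And>j. \<forall>i\<le>j. \<not> good p S (mu i) \<Longrightarrow> maximizer p S (mu j) (X j)"
    and bad: "\<forall>i\<le>j. \<not> good p S (mu i)"
  shows "card (X j) + j \<le> card S"
  using bad
proof (induction j)
  case 0
  then show ?case
    using maximizers[OF "0.prems"] finite_ground by (simp add: maximizer_def card_mono)
next
  case (Suc j)
  then have bad_j: "\<forall>i\<le>j. \<not> good p S (mu i)"
    by simp
  have "\<not> good p S (ceil_ratio p (X j))"
    using Suc.prems[rule_format, of "Suc j"] by (simp add: step)
  moreover have "maximizer p S (ceil_ratio p (X j)) (X (Suc j))"
    using maximizers[OF Suc.prems] by (simp add: step)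
  ultimately have "card (X (Suc j)) < card (X j)"
    using bad_j maximizers[OF bad_j] by (intro card_maximizer_less[of "mu j"]) auto
  with Suc.IH[OF bad_j] show ?case
    by simp
qed

lemma procedure_first_good:
  assumes step: "\<And>j. mu (Suc j) = ceil_ratio p (X j)"
    and maximizers: "\<And>j. \<forall>i\<le>j. \<not> good p S (mu i) \<Longrightarrow> maximizer p S (mu j) (X j)"
  obtains h where "h \<le> card S" and "good p S (mu h)" and "\<forall>j<h. \<not> good p S (mu j)"
proof -
  have "j < card S" if bad: "\<forall>i\<le>j. \<not> good p S (mu i)" for j
  proof -
    have "card (X j) > 0"
      using bad maximizers[OF bad] by (auto elim: maximizer_of_not_goodE)
    with card_procedure_bound[OF step maximizers bad] show ?thesis
      by simp
  qed
  then have "\<not> (\<forall>i\<le>card S. \<not> good p S (mu i))"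
    by blast
  then obtain j where "j \<le> card S" and "good p S (mu j)"
    by auto
  define h where "h = (LEAST j. good p S (mu j))"
  show thesis
  proof (rule that)
    show "good p S (mu h)"
      unfolding h_def using \<open>good p S (mu j)\<close> by (rule LeastI)
    show "h \<le> card S"
      unfolding h_def using \<open>good p S (mu j)\<close> \<open>j \<le> card S\<close> by (meson Least_le order_trans)
    show "\<forall>i<h. \<not> good p S (mu i)"
      unfolding h_def using not_less_Least by blast
  qed
qed

end

theorem theorem2p11:
  fixes S :: "'a set" and p :: "'a set \<Rightarrow> ereal"
    and X :: "nat \<Rightarrow> 'a set" and mu :: "nat \<Rightarrow> int"
  assumes fin: "finite S" and ne: "card S \<ge> 1"
    and intval: "\<forall>Y. Y \<subseteq> S \<longrightarrow> p Y = -\<infinity> \<or> (\<exists>k::int. p Y = ereal (real_of_int k))"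
    and p_empty: "p {} = 0"
    and p_S: "p S \<noteq> -\<infinity>"
    and mu0: "mu 0 = ceil_ratio p S - 1"
    and X0: "maximizer p S (mu 0) (X 0)"
    and muj: "\<forall>j\<ge>1. mu j = ceil_ratio p (X (j - 1))"
    and Xj: "\<forall>j\<ge>1. (\<forall>i\<in>{1..j}. \<not> good p S (mu i)) \<longrightarrow> maximizer p S (mu j) (X j)"
  shows "\<exists>h. 1 \<le> h \<and> h \<le> card S \<and> good p S (mu h)
             \<and> (\<forall>j\<in>{1..<h}. \<not> good p S (mu j)) \<and> mu h = mu_min p S"
proof -
  interpret finite_set_function S p
    using fin p_empty intval by unfold_locales auto
  obtain k :: int where "p S = ereal (real_of_int k)"
    using intval p_S by blast
  then have bad0: "\<not> good p S (mu 0)"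
    using not_good_ceil_ratio_minus_one[of p S] ne mu0 by simp
  have step: "mu (Suc j) = ceil_ratio p (X j)" for j
    using muj by simp
  have maximizers: "maximizer p S (mu j) (X j)" if "\<forall>i\<le>j. \<not> good p S (mu i)" for j
    using that X0 Xj by (cases "j = 0") auto
  obtain h where "h \<le> card S" and good_h: "good p S (mu h)" and bad: "\<forall>j<h. \<not> good p S (mu j)"
    using step maximizers by (rule procedure_first_good)
  then obtain i where h: "h = Suc i"
    using bad0 by (cases h) auto
  have "mu h = mu_min p S"
    using mu_min_eq_ceil_ratio_maximizer[of "mu i" "X i"] maximizers[of i] bad good_h
    by (simp add: h step)
  with \<open>h \<le> card S\<close> good_h bad show ?thesis
    by (intro exI[of _ h]) (auto simp: h)
qed

end
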